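(* The contravariant components $\Gamma^{ij}_k(u)=-\sum_s g^{is}(u)\Gamma^j_{sk}(u)$ of the Levi-Civita connection defined by $g$, written in the coordinates $(u_1,\dots,u_n)$, are polynomial functions of $(u_1,\dots,u_n)$ which depend at most linearly on $u_{n-1}$.
   Context: $n\ge2$. $g$ is the $B_n$-invariant flat cometric $g^{ij}(p)=\frac{1-\delta^{ij}}{p_ip_j}$ on $\mathbb{C}^n$ (with inverse metric $g_{ij}(p)=(\frac{1}{n-1}-\delta_{ij})p_ip_j$), where $B_n$ acts by permutations and sign changes of coordinates; $u_k=\sum_{1\le i_1<\dots<i_k\le n}p_{i_1}^2\cdots p_{i_k}^2$ are basic invariants used as coordinates on the orbit space, $g^{ij}(u)=\sum_{k,l}g^{kl}(p)\frac{\partial u_i}{\partial p_k}\frac{\partial u_j}{\partial p_l}$, and $\Gamma^j_{sk}(u)$ are the Christoffel symbols of the Levi-Civita connection of $g$ in the coordinates $u$. *)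

theory Defs
  imports "HOL-Analysis.Analysis"
begin

text \<open>Points of C^n are encoded as functions nat => complex, coordinates indexed by 1..n,
  vanishing outside {1..n}. nat => complex carries the product topology.\<close>

definition Cn :: "nat \<Rightarrow> (nat \<Rightarrow> complex) set" where
  "Cn n = {v. \<forall>k. k \<notin> {1..n} \<longrightarrow> v k = 0}"

definition pd :: "((nat \<Rightarrow> complex) \<Rightarrow> complex) \<Rightarrow> (nat \<Rightarrow> complex) \<Rightarrow> nat \<Rightarrow> complex" where
  "pd f v k = deriv (\<lambda>t. f (v(k := t))) (v k)"

definition ubasic :: "nat \<Rightarrow> nat \<Rightarrow> (nat \<Rightarrow> complex) \<Rightarrow> complex" where
  "ubasic n k p = (\<Sum>S\<in>{S. S \<subseteq> {1..n} \<and> card S = k}. \<Prod>i\<in>S. (p i)^2)"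

definition umap :: "nat \<Rightarrow> (nat \<Rightarrow> complex) \<Rightarrow> (nat \<Rightarrow> complex)" where
  "umap n p = (\<lambda>k. if k \<in> {1..n} then ubasic n k p else 0)"

definition gcop :: "(nat \<Rightarrow> complex) \<Rightarrow> nat \<Rightarrow> nat \<Rightarrow> complex" where
  "gcop p i j = (if i = j then 0 else 1 / (p i * p j))"

definition gp :: "nat \<Rightarrow> (nat \<Rightarrow> complex) \<Rightarrow> nat \<Rightarrow> nat \<Rightarrow> complex" where
  "gp n p i j = (1 / (of_nat n - 1) - (if i = j then 1 else 0)) * p i * p j"

definition gcou :: "nat \<Rightarrow> (nat \<Rightarrow> complex) \<Rightarrow> nat \<Rightarrow> nat \<Rightarrow> complex" where
  "gcou n p i j = (\<Sum>k=1..n. \<Sum>l=1..n. gcop p k l * pd (ubasic n i) p k * pd (ubasic n j) p l)"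

text \<open>A local chart of the orbit space by the coordinates u: a continuous local inverse phi of
  the map p |-> u(p) on a (relatively) open set V of C^n, landing in the generic region
  (p_a nonzero, p_a^2 distinct) where u is a local coordinate system.\<close>
definition generic_chart :: "nat \<Rightarrow> (nat \<Rightarrow> complex) set \<Rightarrow> ((nat \<Rightarrow> complex) \<Rightarrow> (nat \<Rightarrow> complex)) \<Rightarrow> bool" where
  "generic_chart n V \<phi> \<longleftrightarrow>
     V \<subseteq> Cn n \<and> openin (top_of_set (Cn n)) V \<and> continuous_on V \<phi> \<and>
     (\<forall>v\<in>V. \<phi> v \<in> Cn n \<and> umap n (\<phi> v) = v \<and>
        (\<forall>a\<in>{1..n}. \<phi> v a \<noteq> 0) \<and>
        (\<forall>a\<in>{1..n}. \<forall>b\<in>{1..n}. a \<noteq> b \<longrightarrow> (\<phi> v a)^2 \<noteq> (\<phi> v b)^2))"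

definition gu_low :: "nat \<Rightarrow> ((nat \<Rightarrow> complex) \<Rightarrow> (nat \<Rightarrow> complex)) \<Rightarrow> (nat \<Rightarrow> complex) \<Rightarrow> nat \<Rightarrow> nat \<Rightarrow> complex" where
  "gu_low n \<phi> v i j = (\<Sum>a=1..n. \<Sum>b=1..n.
      gp n (\<phi> v) a b * pd (\<lambda>w. \<phi> w a) v i * pd (\<lambda>w. \<phi> w b) v j)"

definition christ :: "nat \<Rightarrow> ((nat \<Rightarrow> complex) \<Rightarrow> (nat \<Rightarrow> complex)) \<Rightarrow> (nat \<Rightarrow> complex) \<Rightarrow> nat \<Rightarrow> nat \<Rightarrow> nat \<Rightarrow> complex" where
  "christ n \<phi> v j s k = 1/2 * (\<Sum>l=1..n. gcou n (\<phi> v) j l *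
      (pd (\<lambda>w. gu_low n \<phi> w l k) v s + pd (\<lambda>w. gu_low n \<phi> w l s) v k
       - pd (\<lambda>w. gu_low n \<phi> w s k) v l))"

definition contra :: "nat \<Rightarrow> ((nat \<Rightarrow> complex) \<Rightarrow> (nat \<Rightarrow> complex)) \<Rightarrow> (nat \<Rightarrow> complex) \<Rightarrow> nat \<Rightarrow> nat \<Rightarrow> nat \<Rightarrow> complex" where
  "contra n \<phi> v i j k = - (\<Sum>s=1..n. gcou n (\<phi> v) i s * christ n \<phi> v j s k)"

end

theory Submission
  imports Defs
begin

text \<open>In the coordinates x_a = p_a^2 the metric is constant, g^ab = 4 (1 - \<delta>_ab) and
  g_ab = (1/(n-1) - \<delta>_ab)/4, and u_k is the k-th elementary symmetric function e_k of x.
  So the Levi-Civita connection only sees the coordinate change x \<mapsto> u: with J = \<partial>u/\<partial>x,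
  J_jc = e_(j-1)(x without x_c), its inverse M = \<partial>x/\<partial>u (from Vieta's formulas) and
  H_jcb = \<partial>^2u_j/\<partial>x_c\<partial>x_b one finds \<Gamma>^ij_k = \<Sum>_c T^ij_c M_ck with T^ij_c = \<Sum>_ab g^ab J_ia H_jcb.
  Recursions for elementary symmetric functions write T^ij_c = \<Sum>_rm a_rm u_m J_(r+1)c with
  constant a_rm (u_0 = 1), and then J M = 1 leaves \<Gamma>^ij_k = \<Sum>_m a_(k-1)m u_m:
  \<Gamma>^ij_k is even affine in u.\<close>

section \<open>Elementary symmetric functions\<close>

definition esym :: "'i set \<Rightarrow> nat \<Rightarrow> ('i \<Rightarrow> 'a::comm_ring_1) \<Rightarrow> 'a" where
  "esym S k x = (\<Sum>B\<in>{B. B \<subseteq> S \<and> card B = k}. \<Prod>i\<in>B. x i)"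

lemma esym_0 [simp]: "finite S \<Longrightarrow> esym S 0 x = 1"
proof -
  assume "finite S"
  then have "{B. B \<subseteq> S \<and> card B = 0} = {{}}"
    by (auto simp: card_eq_0_iff dest: finite_subset)
  then show ?thesis by (simp add: esym_def)
qed

lemma esym_above_card: "finite S \<Longrightarrow> card S < k \<Longrightarrow> esym S k x = 0"
proof -
  assume "finite S" "card S < k"
  then have no_subsets: "{B. B \<subseteq> S \<and> card B = k} = {}"
    by (auto dest!: card_mono[OF \<open>finite S\<close>])
  show ?thesis unfolding esym_def no_subsets by simp
qed

lemma esym_Suc_insert:
  assumes "finite S" "a \<notin> S"
  shows "esym (insert a S) (Suc k) x = esym S (Suc k) x + x a * esym S k x"
proof -
  let ?without = "{B. B \<subseteq> S \<and> card B = Suc k}"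
  let ?with = "insert a ` {B. B \<subseteq> S \<and> card B = k}"
  have split: "{B. B \<subseteq> insert a S \<and> card B = Suc k} = ?without \<union> ?with"
  proof (intro equalityI subsetI)
    fix B assume B: "B \<in> {B. B \<subseteq> insert a S \<and> card B = Suc k}"
    show "B \<in> ?without \<union> ?with"
    proof (cases "a \<in> B")
      case True
      then have "B = insert a (B - {a})" "B - {a} \<subseteq> S" "card (B - {a}) = k"
        using B assms by (auto simp: card_Diff_singleton)
      then show ?thesis by blast
    next
      case False
      then show ?thesis using B by blast
    qed
  next
    fix B assume "B \<in> ?without \<union> ?with"
    then show "B \<in> {B. B \<subseteq> insert a S \<and> card B = Suc k}"
      using assms by (auto simp: card_insert_if rev_finite_subset[OF assms(1)])
  qed
  have finite_subsets: "finite {B. B \<subseteq> S \<and> card B = j}" for j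
    using assms(1) by (auto intro: finite_subset[of _ "Pow S"])
  have "esym (insert a S) (Suc k) x = (\<Sum>B\<in>?without. \<Prod>i\<in>B. x i) + (\<Sum>B\<in>?with. \<Prod>i\<in>B. x i)"
    unfolding esym_def split
    by (rule sum.union_disjoint) (use finite_subsets assms(2) in auto)
  also have "(\<Sum>B\<in>?with. \<Prod>i\<in>B. x i) = (\<Sum>B\<in>{B. B \<subseteq> S \<and> card B = k}. \<Prod>i\<in>insert a B. x i)"
    by (rule sum.reindex_cong[where l="insert a"]) (use assms(2) in \<open>auto simp: inj_on_def\<close>)
  also have "\<dots> = x a * esym S k x"
    unfolding esym_def sum_distrib_left
  proof (intro sum.cong refl)
    fix B assume "B \<in> {B. B \<subseteq> S \<and> card B = k}"
    then have "finite B" "a \<notin> B" using assms by (auto intro: rev_finite_subset)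
    then show "(\<Prod>i\<in>insert a B. x i) = x a * (\<Prod>i\<in>B. x i)" by simp
  qed
  finally show ?thesis by (simp add: esym_def)
qed

lemma esym_Suc_remove:
  "finite S \<Longrightarrow> a \<in> S \<Longrightarrow> esym S (Suc k) x = esym (S - {a}) (Suc k) x + x a * esym (S - {a}) k x"
  using esym_Suc_insert[of "S - {a}" a k x] by (simp add: insert_absorb)

lemma vieta_esym:
  assumes "finite S"
  shows "(\<Prod>b\<in>S. Y - x b) = (\<Sum>k\<le>card S. (-1)^k * esym S k x * Y^(card S - k))"
  using assms
proof (induction S rule: finite_induct)
  case empty
  then show ?case by simp
next
  case (insert a S)
  let ?m = "card S"
  let ?e = "\<lambda>k. esym S k x"
  let ?S = "\<Sum>k\<le>?m. (-1)^k * ?e k * Y^(?m - k)"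
  have e_Suc: "esym (insert a S) (Suc k) x = ?e (Suc k) + x a * ?e k" for k
    using esym_Suc_insert[OF insert(1,2)] .
  have e_top: "?e (Suc ?m) = 0" by (rule esym_above_card[OF insert(1)]) simp
  have "(\<Sum>k\<le>Suc ?m. (-1)^k * esym (insert a S) k x * Y^(Suc ?m - k))
      = Y^(Suc ?m) + (\<Sum>k\<le>?m. (-1)^(Suc k) * ?e (Suc k) * Y^(?m - k)) - x a * ?S"
    by (subst sum.atMost_Suc_shift)
      (simp add: insert e_Suc algebra_simps sum.distrib sum_distrib_left sum_negf sum_subtractf)
  also have "Y^(Suc ?m) + (\<Sum>k\<le>?m. (-1)^(Suc k) * ?e (Suc k) * Y^(?m - k))
      = (\<Sum>k\<le>Suc ?m. (-1)^k * ?e k * Y^(Suc ?m - k))"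
    by (subst sum.atMost_Suc_shift) (simp add: insert)
  also have "\<dots> = Y * ?S"
    unfolding sum_distrib_left by (simp add: e_top Suc_diff_le mult_ac)
  finally show ?case using insert by (simp add: algebra_simps)
qed

lemma sum_esym_remove:
  fixes x :: "'i \<Rightarrow> 'a::comm_ring_1"
  assumes "finite S"
  shows "(\<Sum>b\<in>S. esym (S - {b}) m x) = of_nat (card S - m) * esym S m x"
  using assms
proof (induction S arbitrary: m rule: finite_induct)
  case empty
  then show ?case by simp
next
  case (insert a S)
  have remove_insert: "insert a S - {b} = insert a (S - {b})" if "b \<in> S" for b
    using insert that by auto
  have split: "(\<Sum>b\<in>insert a S. esym (insert a S - {b}) m x)
      = esym S m x + (\<Sum>b\<in>S. esym (insert a (S - {b})) m x)"
    using insert by (simp add: remove_insert)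
  show ?case
  proof (cases m)
    case 0
    then show ?thesis using split insert by simp
  next
    case (Suc k)
    have "(\<Sum>b\<in>S. esym (insert a (S - {b})) m x)
        = of_nat (card S - m) * esym S m x + x a * (of_nat (card S - k) * esym S k x)"
      using insert Suc by (simp add: esym_Suc_insert sum.distrib sum_distrib_left[symmetric])
    moreover have "esym (insert a S) m x = esym S m x + x a * esym S k x"
      using Suc by (simp add: esym_Suc_insert[OF insert(1,2)])
    moreover have "of_nat (card S - k) = (1::'a) + of_nat (card S - m) \<or> esym S m x = 0"
      using Suc by (cases "m \<le> card S") (auto simp: Suc_diff_le esym_above_card[OF insert(1)])
    ultimately show ?thesis
      using split insert Suc by (auto simp: algebra_simps)
  qed
qed

lemma has_field_derivative_esym:
  fixes f :: "'i \<Rightarrow> 'a::real_normed_field \<Rightarrow> 'a"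
  assumes "finite S" "\<And>d. d \<in> S \<Longrightarrow> (f d has_field_derivative f' d) (at z)"
  shows "((\<lambda>t. esym S (Suc m) (\<lambda>i. f i t)) has_field_derivative
           (\<Sum>d\<in>S. f' d * esym (S - {d}) m (\<lambda>i. f i z))) (at z)"
  using assms
proof (induction S arbitrary: m rule: finite_induct)
  case empty
  then show ?case by (simp add: esym_above_card)
next
  case (insert a S)
  have remove_insert: "insert a S - {d} = insert a (S - {d})" if "d \<in> S" for d
    using insert that by auto
  let ?x = "\<lambda>i. f i z"
  have IH: "((\<lambda>t. esym S (Suc k) (\<lambda>i. f i t)) has_field_derivative
      (\<Sum>d\<in>S. f' d * esym (S - {d}) k ?x)) (at z)" for k
    using insert by blast
  have deriv: "((\<lambda>t. esym S (Suc m) (\<lambda>i. f i t) + f a t * esym S m (\<lambda>i. f i t)) has_field_derivative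
      (\<Sum>d\<in>S. f' d * esym (S - {d}) m ?x) + f' a * esym S m ?x
        + f a z * (case m of 0 \<Rightarrow> 0 | Suc k \<Rightarrow> \<Sum>d\<in>S. f' d * esym (S - {d}) k ?x)) (at z)"
  proof (cases m)
    case 0
    then show ?thesis using IH[of 0] insert by (auto intro!: derivative_eq_intros)
  next
    case (Suc k)
    then show ?thesis using IH[of m] IH[of k] insert by (auto intro!: derivative_eq_intros)
  qed
  have deriv_value: "(\<Sum>d\<in>insert a S. f' d * esym (insert a S - {d}) m ?x)
      = (\<Sum>d\<in>S. f' d * esym (S - {d}) m ?x) + f' a * esym S m ?x
        + f a z * (case m of 0 \<Rightarrow> 0 | Suc k \<Rightarrow> \<Sum>d\<in>S. f' d * esym (S - {d}) k ?x)"
    using insert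
    by (cases m) (simp_all add: remove_insert esym_Suc_insert sum.distrib sum_distrib_left algebra_simps)
  have "(\<lambda>t. esym (insert a S) (Suc m) (\<lambda>i. f i t))
      = (\<lambda>t. esym S (Suc m) (\<lambda>i. f i t) + f a t * esym S m (\<lambda>i. f i t))"
    by (simp add: esym_Suc_insert[OF insert(1,2)])
  then show ?case unfolding deriv_value using deriv by simp
qed

text \<open>If of the elementary symmetric functions of the roots x only the i-th moves, by d, the new
  roots y satisfy this identity; it yields the difference quotient of a root.\<close>

lemma prod_diff_perturbed_roots:
  fixes x y :: "'i \<Rightarrow> 'a::comm_ring_1"
  assumes "finite S" "a \<in> S" "i \<le> card S"
    and perturbed: "\<And>k. k \<le> card S \<Longrightarrow> esym S k y = esym S k x + (if k = i then d else 0)"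
  shows "(y a - x a) * (\<Prod>b\<in>S - {a}. y a - x b) = - ((-1)^i * d * y a ^ (card S - i))"
proof -
  have "0 = (\<Prod>b\<in>S. y a - y b)"
    using assms(1,2) by (intro prod_zero[symmetric]) auto
  also have "\<dots> = (\<Sum>k\<le>card S. (-1)^k * esym S k x * y a ^ (card S - k)
      + (if k = i then (-1)^i * d * y a ^ (card S - i) else 0))"
    unfolding vieta_esym[OF assms(1)] by (intro sum.cong refl) (simp add: perturbed algebra_simps)
  also have "\<dots> = (\<Prod>b\<in>S. y a - x b) + (-1)^i * d * y a ^ (card S - i)"
    unfolding vieta_esym[OF assms(1)] sum.distrib using assms(3) by simp
  also have "(\<Prod>b\<in>S. y a - x b) = (y a - x a) * (\<Prod>b\<in>S - {a}. y a - x b)"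
    using assms(1,2) by (simp add: prod.remove)
  finally show ?thesis by (simp add: eq_neg_iff_add_eq_0)
qed

lemma sum_contract:
  fixes K Z :: "'j \<Rightarrow> 'a::comm_semiring_0" and P :: "'l \<Rightarrow> 'j \<Rightarrow> 'a" and Q :: "'j \<Rightarrow> 'l \<Rightarrow> 'a"
  shows "(\<Sum>l\<in>L. (\<Sum>d\<in>D. K d * P l d) * (\<Sum>a\<in>A. Q a l * Z a))
       = (\<Sum>d\<in>D. \<Sum>a\<in>A. K d * Z a * (\<Sum>l\<in>L. Q a l * P l d))"
proof -
  have "(\<Sum>l\<in>L. (\<Sum>d\<in>D. K d * P l d) * (\<Sum>a\<in>A. Q a l * Z a))
      = (\<Sum>l\<in>L. \<Sum>a\<in>A. \<Sum>d\<in>D. K d * Z a * (Q a l * P l d))"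
    by (simp add: sum_distrib_left sum_distrib_right mult_ac)
  also have "\<dots> = (\<Sum>a\<in>A. \<Sum>l\<in>L. \<Sum>d\<in>D. K d * Z a * (Q a l * P l d))"
    by (rule sum.swap)
  also have "\<dots> = (\<Sum>a\<in>A. \<Sum>d\<in>D. \<Sum>l\<in>L. K d * Z a * (Q a l * P l d))"
    by (rule sum.cong[OF refl], rule sum.swap)
  also have "\<dots> = (\<Sum>d\<in>D. \<Sum>a\<in>A. \<Sum>l\<in>L. K d * Z a * (Q a l * P l d))"
    by (rule sum.swap)
  finally show ?thesis by (simp add: sum_distrib_left)
qed

lemma sum_off_diagonal:
  fixes f g :: "'i \<Rightarrow> 'a::comm_ring_1"
  assumes "finite S"
  shows "(\<Sum>a\<in>S. \<Sum>b\<in>S. if a = b then 0 else f a * g b) = sum f S * sum g S - (\<Sum>a\<in>S. f a * g a)"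
proof -
  have "(\<Sum>b\<in>S. if a = b then 0 else f a * g b) = f a * sum g S - f a * g a" if "a \<in> S" for a
  proof -
    have "(\<Sum>b\<in>S. if a = b then 0 else f a * g b) = (\<Sum>b\<in>S. f a * g b - (if a = b then f a * g b else 0))"
      by (rule sum.cong) auto
    also have "\<dots> = f a * sum g S - f a * g a"
      using assms that by (simp add: sum_subtractf sum_distrib_left)
    finally show ?thesis .
  qed
  then have "(\<Sum>a\<in>S. \<Sum>b\<in>S. if a = b then 0 else f a * g b) = (\<Sum>a\<in>S. f a * sum g S - f a * g a)"
    by (rule sum.cong[OF refl])
  also have "\<dots> = sum f S * sum g S - (\<Sum>a\<in>S. f a * g a)"
    by (simp add: sum_subtractf sum_distrib_right)
  finally show ?thesis .
qed

lemma solve_by_left_inverse: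
  fixes M J :: "'i \<Rightarrow> 'i \<Rightarrow> 'a::comm_ring_1"
  assumes "finite S" "a \<in> S"
    and MJ: "\<And>c. c \<in> S \<Longrightarrow> (\<Sum>j\<in>S. M a j * J j c) = of_bool (a = c)"
    and solution: "\<And>j. j \<in> S \<Longrightarrow> (\<Sum>c\<in>S. J j c * y c) = b j"
  shows "y a = (\<Sum>j\<in>S. M a j * b j)"
proof -
  have "y a = (\<Sum>c\<in>S. (\<Sum>j\<in>S. M a j * J j c) * y c)"
    using assms(1,2) MJ by (simp cong: sum.cong)
  also have "\<dots> = (\<Sum>j\<in>S. M a j * (\<Sum>c\<in>S. J j c * y c))"
    by (simp add: sum_distrib_left sum_distrib_right mult_ac) (rule sum.swap)
  also have "\<dots> = (\<Sum>j\<in>S. M a j * b j)"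
    using solution by simp
  finally show ?thesis .
qed

text \<open>In the following lemmas x are flat coordinates with constant metric G and cometric Ginv, and u
  are further coordinates: J = \<partial>u/\<partial>x, M = \<partial>x/\<partial>u, H j c d = \<partial>^2u_j/\<partial>x_c\<partial>x_d,
  N a s l = \<partial>^2x_a/\<partial>u_s\<partial>u_l; gup is the cometric in u and dg l k s = \<partial>g_lk/\<partial>u_s.\<close>

lemma christoffel_of_flat_coords:
  fixes G Ginv J M gup :: "'i \<Rightarrow> 'i \<Rightarrow> 'a::field_char_0" and N dg :: "'i \<Rightarrow> 'i \<Rightarrow> 'i \<Rightarrow> 'a"
  assumes "finite S"
    and MJ: "\<And>a d. a \<in> S \<Longrightarrow> d \<in> S \<Longrightarrow> (\<Sum>l\<in>S. M a l * J l d) = of_bool (a = d)"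
    and G_sym: "\<And>a b. G a b = G b a"
    and Ginv: "\<And>c b. c \<in> S \<Longrightarrow> b \<in> S \<Longrightarrow> (\<Sum>d\<in>S. G d b * Ginv c d) = of_bool (c = b)"
    and N_sym: "\<And>a s l. N a s l = N a l s"
    and gup: "\<And>j l. gup j l = (\<Sum>c\<in>S. \<Sum>d\<in>S. Ginv c d * J j c * J l d)"
    and dg: "\<And>l k s. dg l k s = (\<Sum>a\<in>S. \<Sum>b\<in>S. G a b * (N a s l * M b k + M a l * N b s k))"
  shows "1/2 * (\<Sum>l\<in>S. gup j l * (dg l k s + dg l s k - dg s k l)) = (\<Sum>c\<in>S. J j c * N c s k)"
proof -
  define A where "A l s k = (\<Sum>a\<in>S. M a l * (\<Sum>b\<in>S. G a b * N b s k))" for l s k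
  have A_sym: "A l s k = A l k s" for l s k
    unfolding A_def by (subst N_sym) (rule refl)
  have dg_A: "dg l k s = A k s l + A l s k" for l k s
  proof -
    have "(\<Sum>a\<in>S. \<Sum>b\<in>S. G a b * (N a s l * M b k)) = A k s l"
      unfolding A_def sum_distrib_left by (subst sum.swap) (simp add: G_sym mult_ac)
    then show ?thesis
      unfolding dg A_def by (simp add: distrib_left sum.distrib sum_distrib_left mult_ac)
  qed
  have first_kind: "dg l k s + dg l s k - dg s k l = 2 * A l s k" for l k s
    unfolding dg_A using A_sym[of k s l] A_sym[of s k l] A_sym[of l k s] by simp
  have gup_swap: "gup j l = (\<Sum>d\<in>S. (\<Sum>c\<in>S. Ginv c d * J j c) * J l d)" for l
    unfolding gup by (subst sum.swap) (simp add: sum_distrib_right)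
  have "(\<Sum>l\<in>S. gup j l * A l s k)
      = (\<Sum>l\<in>S. (\<Sum>d\<in>S. (\<Sum>c\<in>S. Ginv c d * J j c) * J l d) * (\<Sum>a\<in>S. M a l * (\<Sum>b\<in>S. G a b * N b s k)))"
    unfolding gup_swap A_def ..
  also have "\<dots> = (\<Sum>d\<in>S. (\<Sum>c\<in>S. Ginv c d * J j c) * (\<Sum>b\<in>S. G d b * N b s k))"
    unfolding sum_contract using MJ \<open>finite S\<close> by (simp cong: sum.cong)
  also have "\<dots> = (\<Sum>c\<in>S. \<Sum>b\<in>S. J j c * N b s k * (\<Sum>d\<in>S. G d b * Ginv c d))"
    by (subst sum_contract[symmetric]) (simp add: mult_ac)
  also have "\<dots> = (\<Sum>c\<in>S. J j c * N c s k)"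
    using Ginv \<open>finite S\<close> by (simp cong: sum.cong)
  finally show ?thesis
    unfolding first_kind by (simp add: sum_distrib_left mult_ac)
qed

lemma jac_contract_inverse_deriv:
  fixes J M :: "'i \<Rightarrow> 'i \<Rightarrow> 'a::comm_ring_1" and H N :: "'i \<Rightarrow> 'i \<Rightarrow> 'i \<Rightarrow> 'a"
  assumes "finite S" "j \<in> S"
    and JM: "\<And>j i. j \<in> S \<Longrightarrow> i \<in> S \<Longrightarrow> (\<Sum>c\<in>S. J j c * M c i) = of_bool (j = i)"
    and N: "\<And>a s l. N a s l = - (\<Sum>j\<in>S. M a j * (\<Sum>c\<in>S. \<Sum>d\<in>S. H j c d * M d s * M c l))"
  shows "(\<Sum>c\<in>S. J j c * N c s k) = - (\<Sum>c\<in>S. \<Sum>d\<in>S. H j c d * M d s * M c k)"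
proof -
  define X where "X j' = (\<Sum>c\<in>S. \<Sum>d\<in>S. H j' c d * M d s * M c k)" for j'
  have "(\<Sum>c\<in>S. J j c * N c s k) = - (\<Sum>c\<in>S. \<Sum>j'\<in>S. J j c * M c j' * X j')"
    unfolding N X_def[symmetric] by (simp add: sum_distrib_left sum_negf mult_ac)
  also have "\<dots> = - (\<Sum>j'\<in>S. X j' * (\<Sum>c\<in>S. J j c * M c j'))"
    by (subst sum.swap) (simp add: sum_distrib_left mult_ac)
  also have "\<dots> = - X j"
    using JM assms(1,2) by (simp cong: sum.cong)
  finally show ?thesis unfolding X_def .
qed

lemma cometric_contract_hess:
  fixes Ginv J M :: "'i \<Rightarrow> 'i \<Rightarrow> 'a::comm_ring_1" and H :: "'i \<Rightarrow> 'i \<Rightarrow> 'i \<Rightarrow> 'a"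
  assumes "finite S"
    and MJ: "\<And>a d. a \<in> S \<Longrightarrow> d \<in> S \<Longrightarrow> (\<Sum>l\<in>S. M a l * J l d) = of_bool (a = d)"
  shows "(\<Sum>s\<in>S. (\<Sum>a\<in>S. \<Sum>b\<in>S. Ginv a b * J i a * J s b) * (\<Sum>c\<in>S. \<Sum>d\<in>S. H j c d * M d s * M c k))
       = (\<Sum>c\<in>S. (\<Sum>a\<in>S. \<Sum>b\<in>S. Ginv a b * J i a * H j c b) * M c k)"
proof -
  have gup_swap: "(\<Sum>a\<in>S. \<Sum>b\<in>S. Ginv a b * J i a * J s b) = (\<Sum>b\<in>S. (\<Sum>a\<in>S. Ginv a b * J i a) * J s b)" for s
    by (subst sum.swap) (simp add: sum_distrib_right)
  have hess_swap: "(\<Sum>c\<in>S. \<Sum>d\<in>S. H j c d * M d s * M c k) = (\<Sum>d\<in>S. M d s * (\<Sum>c\<in>S. H j c d * M c k))" for s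
    by (subst sum.swap) (simp add: sum_distrib_left mult_ac)
  let ?F = "\<lambda>a b c. Ginv a b * J i a * H j c b * M c k"
  have "(\<Sum>s\<in>S. (\<Sum>a\<in>S. \<Sum>b\<in>S. Ginv a b * J i a * J s b) * (\<Sum>c\<in>S. \<Sum>d\<in>S. H j c d * M d s * M c k))
      = (\<Sum>b\<in>S. (\<Sum>a\<in>S. Ginv a b * J i a) * (\<Sum>c\<in>S. H j c b * M c k))"
    unfolding gup_swap hess_swap sum_contract using MJ \<open>finite S\<close> by (simp cong: sum.cong)
  also have "\<dots> = (\<Sum>b\<in>S. \<Sum>c\<in>S. \<Sum>a\<in>S. ?F a b c)"
    by (simp add: sum_distrib_left sum_distrib_right mult_ac)
  also have "\<dots> = (\<Sum>c\<in>S. \<Sum>b\<in>S. \<Sum>a\<in>S. ?F a b c)"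
    by (rule sum.swap)
  also have "\<dots> = (\<Sum>c\<in>S. \<Sum>a\<in>S. \<Sum>b\<in>S. ?F a b c)"
    by (rule sum.cong[OF refl], rule sum.swap)
  finally show ?thesis by (simp add: sum_distrib_right)
qed

lemma contravariant_christoffel_of_flat_coords:
  fixes G Ginv J M gup :: "'i \<Rightarrow> 'i \<Rightarrow> 'a::field_char_0" and H N dg :: "'i \<Rightarrow> 'i \<Rightarrow> 'i \<Rightarrow> 'a"
  assumes "finite S" "j \<in> S"
    and MJ: "\<And>a d. a \<in> S \<Longrightarrow> d \<in> S \<Longrightarrow> (\<Sum>l\<in>S. M a l * J l d) = of_bool (a = d)"
    and JM: "\<And>j i. j \<in> S \<Longrightarrow> i \<in> S \<Longrightarrow> (\<Sum>c\<in>S. J j c * M c i) = of_bool (j = i)"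
    and G_sym: "\<And>a b. G a b = G b a"
    and Ginv: "\<And>c b. c \<in> S \<Longrightarrow> b \<in> S \<Longrightarrow> (\<Sum>d\<in>S. G d b * Ginv c d) = of_bool (c = b)"
    and H_sym: "\<And>j c d. H j c d = H j d c"
    and N: "\<And>a s l. N a s l = - (\<Sum>j\<in>S. M a j * (\<Sum>c\<in>S. \<Sum>d\<in>S. H j c d * M d s * M c l))"
    and gup: "\<And>j l. gup j l = (\<Sum>c\<in>S. \<Sum>d\<in>S. Ginv c d * J j c * J l d)"
    and dg: "\<And>l k s. dg l k s = (\<Sum>a\<in>S. \<Sum>b\<in>S. G a b * (N a s l * M b k + M a l * N b s k))"
  shows "- (\<Sum>s\<in>S. gup i s * (1/2 * (\<Sum>l\<in>S. gup j l * (dg l k s + dg l s k - dg s k l))))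
       = (\<Sum>c\<in>S. (\<Sum>a\<in>S. \<Sum>b\<in>S. Ginv a b * J i a * H j c b) * M c k)"
proof -
  have "(\<Sum>c\<in>S. \<Sum>d\<in>S. H j c d * M d s * M c l) = (\<Sum>c\<in>S. \<Sum>d\<in>S. H j c d * M d l * M c s)" for j s l
    by (subst sum.swap) (simp add: H_sym[of j] mult_ac)
  then have N_sym: "N a s l = N a l s" for a s l
    unfolding N by simp
  have "1/2 * (\<Sum>l\<in>S. gup j l * (dg l k s + dg l s k - dg s k l))
      = - (\<Sum>c\<in>S. \<Sum>d\<in>S. H j c d * M d s * M c k)" for s
    using christoffel_of_flat_coords[OF \<open>finite S\<close> MJ G_sym Ginv N_sym gup dg]
      jac_contract_inverse_deriv[OF \<open>finite S\<close> \<open>j \<in> S\<close> JM N] by simp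
  then show ?thesis
    using cometric_contract_hess[OF \<open>finite S\<close> MJ, of Ginv i] by (simp add: gup sum_negf)
qed

section \<open>The coordinates x_a = p_a^2\<close>

definition sq_coords :: "(nat \<Rightarrow> 'a::monoid_mult) \<Rightarrow> nat \<Rightarrow> 'a" where
  "sq_coords p b = p b ^ 2"

lemma ubasic_eq_esym: "ubasic n k p = esym {1..n} k (sq_coords p)"
  by (simp add: ubasic_def esym_def sq_coords_def)

text \<open>For u_j = esym {1..n} j x: jac n x j c = \<partial>u_j/\<partial>x_c and hess n x j c b = \<partial>^2u_j/\<partial>x_c\<partial>x_b;
  the guard j < 2 is needed because j - 2 truncates.\<close>

definition jac :: "nat \<Rightarrow> (nat \<Rightarrow> 'a::comm_ring_1) \<Rightarrow> nat \<Rightarrow> nat \<Rightarrow> 'a" where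
  "jac n x j c = esym ({1..n} - {c}) (j - 1) x"

definition hess :: "nat \<Rightarrow> (nat \<Rightarrow> 'a::comm_ring_1) \<Rightarrow> nat \<Rightarrow> nat \<Rightarrow> nat \<Rightarrow> 'a" where
  "hess n x j c b = (if b = c \<or> j < 2 then 0 else esym ({1..n} - {c} - {b}) (j - 2) x)"

lemma hess_sym: "hess n x j c b = hess n x j b c"
  unfolding hess_def by (auto simp: Diff_insert2[symmetric] insert_commute)

text \<open>\<partial>x_a/\<partial>u_i, read off from Vieta's formula for \<Prod>_(b \<noteq> c) (x_a - x_b).\<close>

definition jac_inv :: "nat \<Rightarrow> (nat \<Rightarrow> 'a::field) \<Rightarrow> nat \<Rightarrow> nat \<Rightarrow> 'a" where
  "jac_inv n x a i = (-1)^(i + 1) * x a ^ (n - i) / (\<Prod>b\<in>{1..n} - {a}. x a - x b)"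

lemma jac_inv_jac:
  assumes distinct: "\<And>a b. a \<in> {1..n} \<Longrightarrow> b \<in> {1..n} \<Longrightarrow> a \<noteq> b \<Longrightarrow> x a \<noteq> x b"
    and a: "a \<in> {1..n}" and c: "c \<in> {1..n}"
  shows "(\<Sum>j\<in>{1..n}. jac_inv n x a j * jac n x j c) = of_bool (a = c)"
proof -
  let ?D = "\<Prod>b\<in>{1..n} - {a}. x a - x b"
  have D: "?D \<noteq> 0" using distinct a by auto
  have card_remove: "card ({1..n} - {c}) = n - 1" using c by simp
  have "(\<Sum>j\<in>{1..n}. jac_inv n x a j * jac n x j c)
      = (\<Sum>j\<in>{1..n}. (-1)^(j + 1) * x a ^ (n - j) * jac n x j c) / ?D"
    by (simp add: jac_inv_def sum_divide_distrib)
  also have "(\<Sum>j\<in>{1..n}. (-1)^(j + 1) * x a ^ (n - j) * jac n x j c)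
      = (\<Sum>k\<le>n - 1. (-1)^k * esym ({1..n} - {c}) k x * x a ^ (n - 1 - k))"
  proof -
    have "{1..n} = Suc ` {0..n - 1}" using c by (auto simp: image_iff intro!: bexI[of _ "_ - 1"])
    then show ?thesis
      by (simp add: sum.reindex atLeast0AtMost jac_def mult_ac)
  qed
  also have "\<dots> = (\<Prod>b\<in>{1..n} - {c}. x a - x b)"
    using vieta_esym[of "{1..n} - {c}" "x a" x] card_remove by simp
  finally have "(\<Sum>j\<in>{1..n}. jac_inv n x a j * jac n x j c) = (\<Prod>b\<in>{1..n} - {c}. x a - x b) / ?D" .
  moreover have "(\<Prod>b\<in>{1..n} - {c}. x a - x b) = 0" if "a \<noteq> c"
    using a that by (intro prod_zero) auto
  ultimately show ?thesis using D by auto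
qed

text \<open>\<partial>^2x_a/\<partial>u_s\<partial>u_l, as the derivative -M (\<partial>J/\<partial>u_s) M of the inverse matrix M = jac_inv.\<close>

definition jac_inv_deriv :: "nat \<Rightarrow> (nat \<Rightarrow> 'a::field) \<Rightarrow> nat \<Rightarrow> nat \<Rightarrow> nat \<Rightarrow> 'a" where
  "jac_inv_deriv n x a s l = - (\<Sum>j\<in>{1..n}. jac_inv n x a j *
     (\<Sum>c\<in>{1..n}. \<Sum>d\<in>{1..n}. hess n x j c d * jac_inv n x d s * jac_inv n x c l))"

definition cometric_sq :: "nat \<Rightarrow> nat \<Rightarrow> 'a::comm_ring_1" where
  "cometric_sq a b = (if a = b then 0 else 4)"

definition metric_sq :: "nat \<Rightarrow> nat \<Rightarrow> nat \<Rightarrow> 'a::field_char_0" where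
  "metric_sq n a b = (1 / (of_nat n - 1) - (if a = b then 1 else 0)) / 4"

lemma metric_sq_cometric_sq_inverse:
  assumes "2 \<le> n" "c \<in> {1..n}" "b \<in> {1..n}"
  shows "(\<Sum>d\<in>{1..n}. metric_sq n d b * cometric_sq c d) = (of_bool (c = b) :: 'a::field_char_0)"
proof -
  have n1: "(of_nat n - 1 :: 'a) \<noteq> 0"
    using assms(1) by (simp add: of_nat_diff[symmetric])
  have "(\<Sum>d\<in>{1..n}. metric_sq n d b * cometric_sq c d)
      = (\<Sum>d\<in>{1..n}. (1 / (of_nat n - 1) - of_bool (d = b)) - (if d = c then 1 / (of_nat n - 1) - of_bool (d = b) else 0) :: 'a)"
    by (rule sum.cong) (auto simp: metric_sq_def cometric_sq_def)
  also have "\<dots> = of_nat n / (of_nat n - 1) - 1 - (1 / (of_nat n - 1) - of_bool (c = b))"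
    using assms(2,3) by (simp add: sum_subtractf)
  also have "\<dots> = of_bool (c = b)"
    using n1 by (simp add: field_simps)
  finally show ?thesis .
qed

lemma pd_ubasic:
  assumes "c \<in> {1..n}" "i \<in> {1..n}"
  shows "pd (ubasic n i) p c = 2 * p c * jac n (sq_coords p) i c"
proof -
  have "((\<lambda>t. esym {1..n} (Suc (i - 1)) (\<lambda>b. (p(c := t)) b ^ 2)) has_field_derivative
      (\<Sum>d\<in>{1..n}. (if d = c then 2 * p c else 0) * esym ({1..n} - {d}) (i - 1) (\<lambda>b. (p(c := p c)) b ^ 2)))
      (at (p c))"
  proof (rule has_field_derivative_esym)
    fix d
    show "((\<lambda>t. (p(c := t)) d ^ 2) has_field_derivative (if d = c then 2 * p c else 0)) (at (p c))"
      by (cases "d = c") (auto intro!: derivative_eq_intros)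
  qed simp
  moreover have "(\<Sum>d\<in>{1..n}. (if d = c then 2 * p c else 0) * esym ({1..n} - {d}) (i - 1) (\<lambda>b. p b ^ 2))
      = 2 * p c * esym ({1..n} - {c}) (i - 1) (\<lambda>b. p b ^ 2)"
    using assms(1) by (simp add: if_distrib[of "\<lambda>z. z * _"] cong: if_cong)
  ultimately show ?thesis
    using assms(2) unfolding pd_def ubasic_eq_esym jac_def sq_coords_def by (simp add: DERIV_imp_deriv)
qed

lemma gcou_eq_jac:
  assumes nonzero: "\<And>c. c \<in> {1..n} \<Longrightarrow> p c \<noteq> 0" and "i \<in> {1..n}" "j \<in> {1..n}"
  shows "gcou n p i j = (\<Sum>c\<in>{1..n}. \<Sum>d\<in>{1..n}.
           cometric_sq c d * jac n (sq_coords p) i c * jac n (sq_coords p) j d)"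
  unfolding gcou_def
proof (intro sum.cong refl)
  fix c d assume "c \<in> {1..n}" "d \<in> {1..n}"
  then show "gcop p c d * pd (ubasic n i) p c * pd (ubasic n j) p d
      = cometric_sq c d * jac n (sq_coords p) i c * jac n (sq_coords p) j d"
    using assms by (simp add: pd_ubasic gcop_def cometric_sq_def)
qed

section \<open>Combinations of elementary symmetric functions\<close>

text \<open>Since esym ({1..n} - {c}) r x = jac n x (r + 1) c, contracting such an F with jac_inv in c
  leaves an affine function of u.\<close>

definition esym_span :: "nat \<Rightarrow> ((nat \<Rightarrow> 'a::comm_ring_1) \<Rightarrow> nat \<Rightarrow> 'a) \<Rightarrow> bool" where
  "esym_span n F \<longleftrightarrow> (\<exists>a. \<forall>x. \<forall>c\<in>{1..n}.
     F x c = (\<Sum>r<n. \<Sum>m\<le>n. a r m * esym {1..n} m x * esym ({1..n} - {c}) r x))"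

lemma esym_span_cong:
  "esym_span n F \<Longrightarrow> (\<And>x c. c \<in> {1..n} \<Longrightarrow> F x c = G x c) \<Longrightarrow> esym_span n G"
  unfolding esym_span_def by auto

lemma esym_span_add:
  assumes "esym_span n F" "esym_span n G"
  shows "esym_span n (\<lambda>x c. F x c + G x c)"
proof -
  obtain a b where
    "\<forall>x. \<forall>c\<in>{1..n}. F x c = (\<Sum>r<n. \<Sum>m\<le>n. a r m * esym {1..n} m x * esym ({1..n} - {c}) r x)"
    "\<forall>x. \<forall>c\<in>{1..n}. G x c = (\<Sum>r<n. \<Sum>m\<le>n. b r m * esym {1..n} m x * esym ({1..n} - {c}) r x)"
    using assms unfolding esym_span_def by blast
  then show ?thesis unfolding esym_span_def
    by (intro exI[of _ "\<lambda>r m. a r m + b r m"]) (simp add: algebra_simps sum.distrib)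
qed

lemma esym_span_scale:
  assumes "esym_span n F"
  shows "esym_span n (\<lambda>x c. k * F x c)"
proof -
  obtain a where
    "\<forall>x. \<forall>c\<in>{1..n}. F x c = (\<Sum>r<n. \<Sum>m\<le>n. a r m * esym {1..n} m x * esym ({1..n} - {c}) r x)"
    using assms unfolding esym_span_def by blast
  then show ?thesis unfolding esym_span_def
    by (intro exI[of _ "\<lambda>r m. k * a r m"]) (simp add: algebra_simps sum_distrib_left)
qed

lemma esym_span_diff: "esym_span n F \<Longrightarrow> esym_span n G \<Longrightarrow> esym_span n (\<lambda>x c. F x c - G x c)"
  using esym_span_add[of n F "\<lambda>x c. - G x c"] esym_span_scale[of n G "-1"] by simp

lemma esym_span_basic: "esym_span n (\<lambda>x c. esym {1..n} m x * esym ({1..n} - {c}) r x)"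
proof (cases "r < n \<and> m \<le> n")
  case True
  show ?thesis unfolding esym_span_def
  proof (intro exI[of _ "\<lambda>r' m'. if r' = r \<and> m' = m then 1 else 0"] allI ballI)
    fix x :: "nat \<Rightarrow> 'a" and c
    have "(\<Sum>m'\<le>n. (if r' = r \<and> m' = m then 1 else 0) * esym {1..n} m' x * esym ({1..n} - {c}) r' x)
        = (if r' = r then esym {1..n} m x * esym ({1..n} - {c}) r x else 0)" for r'
      using True by (cases "r' = r") (simp_all add: if_distrib[of "\<lambda>z. z * _"] sum.delta cong: if_cong)
    then show "esym {1..n} m x * esym ({1..n} - {c}) r x = (\<Sum>r'<n. \<Sum>m'\<le>n.
        (if r' = r \<and> m' = m then 1 else 0) * esym {1..n} m' x * esym ({1..n} - {c}) r' x)"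
      using True by simp
  qed
next
  case False
  then have "esym {1..n} m x * esym ({1..n} - {c}) r x = 0" if "c \<in> {1..n}" for x :: "nat \<Rightarrow> 'a" and c
    using that by (auto simp: esym_above_card)
  then show ?thesis unfolding esym_span_def
    by (intro exI[of _ "\<lambda>_ _. 0"]) simp
qed

lemma esym_remove_Suc:
  "finite S \<Longrightarrow> c \<in> S \<Longrightarrow> esym (S - {c}) (Suc m) x = esym S (Suc m) x - x c * esym (S - {c}) m x"
  by (simp add: esym_Suc_remove)

lemma esym_span_prod_remove:
  "esym_span n (\<lambda>(x :: nat \<Rightarrow> 'a::comm_ring_1) c. esym ({1..n} - {c}) m1 x * esym ({1..n} - {c}) m2 x)"
proof (induction m1 arbitrary: m2)
  case 0
  show ?case
    by (rule esym_span_cong[OF esym_span_basic[of n 0 m2]]) simp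
next
  case (Suc m1)
  have "esym_span n (\<lambda>(x :: nat \<Rightarrow> 'a) c. esym {1..n} (Suc m1) x * esym ({1..n} - {c}) m2 x
      - esym {1..n} (Suc m2) x * esym ({1..n} - {c}) m1 x
      + esym ({1..n} - {c}) m1 x * esym ({1..n} - {c}) (Suc m2) x)"
    by (intro esym_span_add esym_span_diff Suc.IH esym_span_basic)
  then show ?case
    by (rule esym_span_cong) (simp add: esym_remove_Suc algebra_simps)
qed

lemma esym_span_sum_remove:
  "esym_span n (\<lambda>(x :: nat \<Rightarrow> 'a::comm_ring_1) c. \<Sum>b\<in>{1..n} - {c}. esym ({1..n} - {b}) m1 x * esym ({1..n} - {c} - {b}) m2 x)"
proof (induction m1 arbitrary: m2)
  case 0
  show ?case
  proof (rule esym_span_cong[OF esym_span_scale[OF esym_span_basic[of n 0 m2], of "of_nat (n - 1 - m2)"]])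
    fix x :: "nat \<Rightarrow> 'a" and c assume c: "c \<in> {1..n}"
    show "of_nat (n - 1 - m2) * (esym {1..n} 0 x * esym ({1..n} - {c}) m2 x)
        = (\<Sum>b\<in>{1..n} - {c}. esym ({1..n} - {b}) 0 x * esym ({1..n} - {c} - {b}) m2 x)"
      using sum_esym_remove[of "{1..n} - {c}" m2 x] c by simp
  qed
next
  case (Suc m1)
  have "esym_span n (\<lambda>(x :: nat \<Rightarrow> 'a) c. of_nat (n - 1 - m2) * (esym {1..n} (Suc m1) x * esym ({1..n} - {c}) m2 x)
      - of_nat (n - m1) * (esym {1..n} m1 x * esym ({1..n} - {c}) (Suc m2) x)
      + esym ({1..n} - {c}) m1 x * esym ({1..n} - {c}) (Suc m2) x
      + (\<Sum>b\<in>{1..n} - {c}. esym ({1..n} - {b}) m1 x * esym ({1..n} - {c} - {b}) (Suc m2) x))"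
    by (intro esym_span_add esym_span_diff esym_span_scale esym_span_basic esym_span_prod_remove Suc.IH)
  then show ?case
  proof (rule esym_span_cong)
    fix x :: "nat \<Rightarrow> 'a" and c assume c: "c \<in> {1..n}"
    let ?S = "{1..n} - {c}"
    let ?E = "\<lambda>m. esym {1..n} m x"
    let ?W = "\<lambda>m b. esym ({1..n} - {b}) m x"
    let ?Q = "\<lambda>m b. esym (?S - {b}) m x"
    have W_Suc: "?W (Suc m1) b = ?E (Suc m1) - x b * ?W m1 b" if "b \<in> ?S" for b
      using that by (simp add: esym_remove_Suc)
    have xQ: "x b * ?Q m2 b = ?W (Suc m2) c - ?Q (Suc m2) b" if "b \<in> ?S" for b
      using that esym_Suc_remove[of ?S b m2 x] by (simp add: algebra_simps)
    have sum_Q: "(\<Sum>b\<in>?S. ?Q m2 b) = of_nat (n - 1 - m2) * ?W m2 c"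
      using sum_esym_remove[of ?S m2 x] c by simp
    have sum_W: "(\<Sum>b\<in>?S. ?W m1 b) = of_nat (n - m1) * ?E m1 - ?W m1 c"
      using sum_esym_remove[of "{1..n}" m1 x] sum.remove[of "{1..n}" c "\<lambda>b. ?W m1 b"] c
      by (simp add: algebra_simps)
    have "(\<Sum>b\<in>?S. ?W (Suc m1) b * ?Q m2 b) = (\<Sum>b\<in>?S. ?E (Suc m1) * ?Q m2 b - ?W m1 b * (x b * ?Q m2 b))"
      by (intro sum.cong refl, subst W_Suc) (auto simp: algebra_simps)
    also have "\<dots> = (\<Sum>b\<in>?S. ?E (Suc m1) * ?Q m2 b - ?W m1 b * (?W (Suc m2) c - ?Q (Suc m2) b))"
      by (intro sum.cong refl, subst xQ) auto
    also have "\<dots> = ?E (Suc m1) * (\<Sum>b\<in>?S. ?Q m2 b) - ?W (Suc m2) c * (\<Sum>b\<in>?S. ?W m1 b)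
        + (\<Sum>b\<in>?S. ?W m1 b * ?Q (Suc m2) b)"
      by (simp add: algebra_simps sum_subtractf sum.distrib sum_distrib_left)
    finally show "of_nat (n - 1 - m2) * (?E (Suc m1) * ?W m2 c) - of_nat (n - m1) * (?E m1 * ?W (Suc m2) c)
        + ?W m1 c * ?W (Suc m2) c + (\<Sum>b\<in>?S. ?W m1 b * ?Q (Suc m2) b)
        = (\<Sum>b\<in>?S. ?W (Suc m1) b * ?Q m2 b)"
      unfolding sum_Q sum_W by (simp add: algebra_simps)
  qed
qed

lemma esym_span_mixed:
  "esym_span n (\<lambda>x c. \<Sum>a\<in>{1..n}. \<Sum>b\<in>{1..n}. cometric_sq a b * jac n x i a * hess n x j c b)"
proof (cases "j < 2")
  case True
  then show ?thesis
    using esym_span_scale[OF esym_span_basic, of n 0] by (simp add: hess_def)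
next
  case False
  have "esym_span n (\<lambda>(x :: nat \<Rightarrow> 'a) c.
      (4 * of_nat (n - (i - 1)) * of_nat (n - 1 - (j - 2))) * (esym {1..n} (i - 1) x * esym ({1..n} - {c}) (j - 2) x)
      - 4 * (\<Sum>b\<in>{1..n} - {c}. esym ({1..n} - {b}) (i - 1) x * esym ({1..n} - {c} - {b}) (j - 2) x))"
    by (intro esym_span_diff esym_span_scale esym_span_basic esym_span_sum_remove)
  then show ?thesis
  proof (rule esym_span_cong)
    fix x :: "nat \<Rightarrow> 'a" and c assume c: "c \<in> {1..n}"
    have split_diagonal: "(\<Sum>a\<in>{1..n}. \<Sum>b\<in>{1..n}. cometric_sq a b * jac n x i a * hess n x j c b)
        = 4 * (\<Sum>a\<in>{1..n}. jac n x i a) * (\<Sum>b\<in>{1..n}. hess n x j c b)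
          - 4 * (\<Sum>b\<in>{1..n}. jac n x i b * hess n x j c b)"
    proof -
      have "cometric_sq a b * jac n x i a * hess n x j c b
          = 4 * (if a = b then 0 else jac n x i a * hess n x j c b)" for a b
        by (simp add: cometric_sq_def)
      then have "(\<Sum>a\<in>{1..n}. \<Sum>b\<in>{1..n}. cometric_sq a b * jac n x i a * hess n x j c b)
          = 4 * (\<Sum>a\<in>{1..n}. \<Sum>b\<in>{1..n}. if a = b then 0 else jac n x i a * hess n x j c b)"
        by (simp add: sum_distrib_left)
      then show ?thesis
        unfolding sum_off_diagonal[OF finite_atLeastAtMost] by (simp add: algebra_simps)
    qed
    have "(\<Sum>b\<in>{1..n}. hess n x j c b) = (\<Sum>b\<in>{1..n} - {c}. esym ({1..n} - {c} - {b}) (j - 2) x)"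
      using c False sum.remove[of "{1..n}" c "hess n x j c"] by (simp add: hess_def)
    also have "\<dots> = of_nat (n - 1 - (j - 2)) * esym ({1..n} - {c}) (j - 2) x"
      using sum_esym_remove[of "{1..n} - {c}" "j - 2" x] c by simp
    finally have sum_hess: "(\<Sum>b\<in>{1..n}. hess n x j c b) = \<dots>" .
    have sum_jac_hess: "(\<Sum>b\<in>{1..n}. jac n x i b * hess n x j c b)
        = (\<Sum>b\<in>{1..n} - {c}. esym ({1..n} - {b}) (i - 1) x * esym ({1..n} - {c} - {b}) (j - 2) x)"
      using c False sum.remove[of "{1..n}" c "\<lambda>b. jac n x i b * hess n x j c b"]
      by (simp add: hess_def jac_def)
    have sum_jac: "(\<Sum>a\<in>{1..n}. jac n x i a) = of_nat (n - (i - 1)) * esym {1..n} (i - 1) x"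
      using sum_esym_remove[of "{1..n}" "i - 1" x] by (simp add: jac_def)
    show "(4 * of_nat (n - (i - 1)) * of_nat (n - 1 - (j - 2))) * (esym {1..n} (i - 1) x * esym ({1..n} - {c}) (j - 2) x)
      - 4 * (\<Sum>b\<in>{1..n} - {c}. esym ({1..n} - {b}) (i - 1) x * esym ({1..n} - {c} - {b}) (j - 2) x)
      = (\<Sum>a\<in>{1..n}. \<Sum>b\<in>{1..n}. cometric_sq a b * jac n x i a * hess n x j c b)"
      unfolding split_diagonal sum_hess sum_jac_hess sum_jac by (simp add: algebra_simps)
  qed
qed

section \<open>Charts of the orbit space\<close>

lemma has_field_derivative_of_factorization:
  fixes f h k :: "'a::real_normed_field \<Rightarrow> 'a"
  assumes factor: "\<forall>\<^sub>F t in nhds t0. (f t - f t0) * h t = (t - t0) * k t"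
    and "isCont h t0" "isCont k t0" "h t0 \<noteq> 0"
  shows "(f has_field_derivative k t0 / h t0) (at t0)"
proof -
  have "\<forall>\<^sub>F t in at t0. (f t - f t0) * h t = (t - t0) * k t"
    using factor by (simp add: eventually_nhds_conv_at)
  moreover have "eventually (\<lambda>t. h t \<noteq> 0) (at t0)"
    using \<open>isCont h t0\<close> \<open>h t0 \<noteq> 0\<close> by (auto simp: isCont_def intro: tendsto_imp_eventually_ne)
  moreover have "eventually (\<lambda>t. t \<noteq> t0) (at t0)"
    by (rule eventually_neq_at_within)
  ultimately have quotient: "eventually (\<lambda>t. k t / h t = (f t - f t0) / (t - t0)) (at t0)"
    by eventually_elim (simp add: field_simps)
  moreover have "((\<lambda>t. k t / h t) \<longlongrightarrow> k t0 / h t0) (at t0)"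
    using assms(2-4) by (auto simp: isCont_def intro: tendsto_divide)
  ultimately show ?thesis
    unfolding has_field_derivative_iff using tendsto_cong[OF quotient] by simp
qed

lemma has_field_derivative_of_square:
  fixes q :: "'a::real_normed_field \<Rightarrow> 'a"
  assumes "isCont q t0" "q t0 \<noteq> 0" "((\<lambda>t. q t ^ 2) has_field_derivative D) (at t0)"
  shows "(q has_field_derivative D / (2 * q t0)) (at t0)"
proof -
  obtain g where g: "\<And>t. q t ^ 2 - q t0 ^ 2 = g t * (t - t0)" "isCont g t0" "g t0 = D"
    using assms(3) unfolding CARAT_DERIV by blast
  have "(q has_field_derivative g t0 / (q t0 + q t0)) (at t0)"
  proof (rule has_field_derivative_of_factorization[of q t0 "\<lambda>t. q t + q t0" g])
    have "(q t - q t0) * (q t + q t0) = (t - t0) * g t" for t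
      using g(1)[of t] by (simp add: power2_eq_square algebra_simps)
    then show "\<forall>\<^sub>F t in nhds t0. (q t - q t0) * (q t + q t0) = (t - t0) * g t"
      by simp
    show "q t0 + q t0 \<noteq> 0"
      using assms(2) by (simp flip: mult_2)
  qed (use assms(1) g(2) in auto)
  then show ?thesis using g(3) by (simp flip: mult_2)
qed

context
  fixes n :: nat and V :: "(nat \<Rightarrow> complex) set" and \<phi> :: "(nat \<Rightarrow> complex) \<Rightarrow> nat \<Rightarrow> complex"
  assumes chart: "generic_chart n V \<phi>"
begin
lemma chart_esym: "w \<in> V \<Longrightarrow> k \<in> {1..n} \<Longrightarrow> esym {1..n} k (sq_coords (\<phi> w)) = w k"
proof -
  assume "w \<in> V" "k \<in> {1..n}"
  then have "umap n (\<phi> w) k = w k"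
    using chart unfolding generic_chart_def by auto
  then show ?thesis using \<open>k \<in> {1..n}\<close> by (simp add: umap_def ubasic_eq_esym)
qed

lemma chart_nonzero: "w \<in> V \<Longrightarrow> a \<in> {1..n} \<Longrightarrow> \<phi> w a \<noteq> 0"
  using chart unfolding generic_chart_def by blast

lemma chart_sq_coords_distinct:
  "w \<in> V \<Longrightarrow> a \<in> {1..n} \<Longrightarrow> b \<in> {1..n} \<Longrightarrow> a \<noteq> b \<Longrightarrow> sq_coords (\<phi> w) a \<noteq> sq_coords (\<phi> w) b"
  using chart unfolding generic_chart_def sq_coords_def by blast

lemma chart_line:
  assumes "v \<in> V" "i \<in> {1..n}"
  obtains T where "open T" "v i \<in> T" "\<And>t. t \<in> T \<Longrightarrow> v(i := t) \<in> V"
    "continuous_on T (\<lambda>t. \<phi> (v(i := t)))"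
proof -
  have "openin (top_of_set (Cn n)) V" "continuous_on V \<phi>"
    using chart unfolding generic_chart_def by blast+
  then obtain U where U: "open U" "V = Cn n \<inter> U"
    unfolding openin_open by blast
  have line_cont: "continuous_on UNIV (\<lambda>t. v(i := t))"
  proof (intro continuous_on_coordinatewise_then_product)
    fix k
    show "continuous_on UNIV (\<lambda>t. (v(i := t)) k)" by (cases "k = i") auto
  qed
  define T where "T = (\<lambda>t. v(i := t)) -` U"
  have "v \<in> Cn n" using assms(1) U(2) by blast
  then have line_in_V: "v(i := t) \<in> V" if "t \<in> T" for t
    using assms(2) that U(2) unfolding T_def Cn_def by auto
  have "continuous_on T (\<phi> \<circ> (\<lambda>t. v(i := t)))"
  proof (rule continuous_on_compose)
    show "continuous_on T (\<lambda>t. v(i := t))" using line_cont continuous_on_subset by blast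
    have "(\<lambda>t. v(i := t)) ` T \<subseteq> V" using line_in_V by blast
    then show "continuous_on ((\<lambda>t. v(i := t)) ` T) \<phi>"
      using \<open>continuous_on V \<phi>\<close> by (rule continuous_on_subset[rotated])
  qed
  moreover have "open T"
    unfolding T_def using line_cont U(1) by (simp add: continuous_on_open_vimage)
  moreover have "v i \<in> T"
    unfolding T_def using assms(1) U(2) by simp
  ultimately show ?thesis using that line_in_V by (simp add: o_def)
qed

lemma eventually_chart_line:
  assumes "v \<in> V" "i \<in> {1..n}"
  shows "\<forall>\<^sub>F t in nhds (v i). v(i := t) \<in> V"
proof -
  obtain T where T: "open T" "v i \<in> T" "\<And>t. t \<in> T \<Longrightarrow> v(i := t) \<in> V"
    using chart_line[OF assms] by metis
  show ?thesis
    using eventually_nhds_in_open[OF T(1,2)] by (rule eventually_mono) (rule T(3))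
qed

lemma isCont_chart_line:
  assumes "v \<in> V" "i \<in> {1..n}"
  shows "isCont (\<lambda>t. \<phi> (v(i := t)) a) (v i)"
proof -
  obtain T where T: "open T" "v i \<in> T" "continuous_on T (\<lambda>t. \<phi> (v(i := t)))"
    using chart_line[OF assms] by metis
  have "continuous_on T (\<lambda>t. \<phi> (v(i := t)) a)"
    using T(3) by (rule continuous_on_product_then_coordinatewise)
  then show ?thesis
    using continuous_on_eq_continuous_at[OF T(1)] T(2) by blast
qed

lemma has_field_derivative_chart_sq_coords:
  assumes v: "v \<in> V" and i: "i \<in> {1..n}" and a: "a \<in> {1..n}"
  shows "((\<lambda>t. sq_coords (\<phi> (v(i := t))) a) has_field_derivative jac_inv n (sq_coords (\<phi> v)) a i) (at (v i))"
proof -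
  let ?X = "\<lambda>t. sq_coords (\<phi> (v(i := t)))"
  let ?x = "sq_coords (\<phi> v)"
  define den where "den t = (\<Prod>b\<in>{1..n} - {a}. ?X t a - ?x b)" for t
  have "\<forall>\<^sub>F t in nhds (v i). (?X t a - ?X (v i) a) * den t = (t - v i) * - ((-1)^i * ?X t a ^ (n - i))"
    using eventually_chart_line[OF v i]
  proof eventually_elim
    case (elim t)
    have "esym {1..n} k (?X t) = esym {1..n} k ?x + (if k = i then t - v i else 0)"
      if "k \<le> card {1..n}" for k
      using chart_esym[OF elim, of k] chart_esym[OF v, of k] i that by (cases "k = 0") auto
    from prod_diff_perturbed_roots[OF _ a _ this] show ?case
      using i unfolding den_def by (simp add: mult_ac)
  qed
  moreover have X_cont: "isCont (\<lambda>t. ?X t b) (v i)" for b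
    unfolding sq_coords_def by (intro continuous_intros isCont_chart_line[OF v i])
  then have "isCont den (v i)" "isCont (\<lambda>t. - ((-1)^i * ?X t a ^ (n - i))) (v i)"
    unfolding den_def by (intro continuous_intros X_cont)+
  moreover have "den (v i) \<noteq> 0"
    using chart_sq_coords_distinct[OF v a] unfolding den_def by auto
  ultimately have "((\<lambda>t. ?X t a) has_field_derivative - ((-1)^i * ?X (v i) a ^ (n - i)) / den (v i)) (at (v i))"
    by (rule has_field_derivative_of_factorization)
  then show ?thesis
    unfolding den_def jac_inv_def by simp
qed

lemma has_field_derivative_chart:
  assumes "v \<in> V" "i \<in> {1..n}" "a \<in> {1..n}"
  shows "((\<lambda>t. \<phi> (v(i := t)) a) has_field_derivative
           jac_inv n (sq_coords (\<phi> v)) a i / (2 * \<phi> v a)) (at (v i))"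
  using has_field_derivative_of_square[OF isCont_chart_line[OF assms(1,2)], of a]
    has_field_derivative_chart_sq_coords[OF assms] chart_nonzero[OF assms(1,3)]
  by (simp add: sq_coords_def)

lemma pd_chart:
  "v \<in> V \<Longrightarrow> i \<in> {1..n} \<Longrightarrow> a \<in> {1..n} \<Longrightarrow>
    pd (\<lambda>w. \<phi> w a) v i = jac_inv n (sq_coords (\<phi> v)) a i / (2 * \<phi> v a)"
  unfolding pd_def by (rule DERIV_imp_deriv) (use has_field_derivative_chart in simp)

text \<open>The chain rule for u_j(x(u)) = u_j along a coordinate line.\<close>

lemma jac_jac_inv:
  assumes v: "v \<in> V" and j: "j \<in> {1..n}" and i: "i \<in> {1..n}"
  shows "(\<Sum>c\<in>{1..n}. jac n (sq_coords (\<phi> v)) j c * jac_inv n (sq_coords (\<phi> v)) c i) = of_bool (j = i)"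
proof -
  let ?X = "\<lambda>t. sq_coords (\<phi> (v(i := t)))"
  have deriv_esym: "((\<lambda>t. esym {1..n} (Suc (j - 1)) (\<lambda>b. ?X t b)) has_field_derivative
      (\<Sum>c\<in>{1..n}. jac_inv n (sq_coords (\<phi> v)) c i * esym ({1..n} - {c}) (j - 1) (\<lambda>b. ?X (v i) b))) (at (v i))"
    by (rule has_field_derivative_esym) (use has_field_derivative_chart_sq_coords[OF v i] in auto)
  have on_line: "\<forall>\<^sub>F t in nhds (v i). esym {1..n} (Suc (j - 1)) (\<lambda>b. ?X t b) = (v(i := t)) j"
    using eventually_chart_line[OF v i] by eventually_elim (use chart_esym j in simp)
  have "((\<lambda>t. (v(i := t)) j) has_field_derivative of_bool (j = i)) (at (v i))"
    by (cases "j = i") auto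
  then have "((\<lambda>t. esym {1..n} (Suc (j - 1)) (\<lambda>b. ?X t b)) has_field_derivative of_bool (j = i)) (at (v i))"
    by (subst DERIV_cong_ev[OF refl on_line refl])
  then have "(\<Sum>c\<in>{1..n}. jac_inv n (sq_coords (\<phi> v)) c i * esym ({1..n} - {c}) (j - 1) (\<lambda>b. ?X (v i) b))
      = of_bool (j = i)"
    by (rule DERIV_unique[OF deriv_esym])
  then show ?thesis by (simp add: jac_def mult.commute)
qed

lemma gu_low_chart:
  assumes w: "w \<in> V" and "l \<in> {1..n}" "k \<in> {1..n}"
  shows "gu_low n \<phi> w l k = (\<Sum>a\<in>{1..n}. \<Sum>b\<in>{1..n}.
           metric_sq n a b * jac_inv n (sq_coords (\<phi> w)) a l * jac_inv n (sq_coords (\<phi> w)) b k)"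
  unfolding gu_low_def
proof (intro sum.cong refl)
  fix a b assume "a \<in> {1..n}" "b \<in> {1..n}"
  then show "gp n (\<phi> w) a b * pd (\<lambda>w. \<phi> w a) w l * pd (\<lambda>w. \<phi> w b) w k
      = metric_sq n a b * jac_inv n (sq_coords (\<phi> w)) a l * jac_inv n (sq_coords (\<phi> w)) b k"
    using assms chart_nonzero[OF w] by (simp add: pd_chart gp_def metric_sq_def)
qed

lemma has_field_derivative_chart_jac:
  assumes v: "v \<in> V" and s: "s \<in> {1..n}" and c: "c \<in> {1..n}"
  shows "((\<lambda>t. jac n (sq_coords (\<phi> (v(s := t)))) j c) has_field_derivative
           (\<Sum>d\<in>{1..n}. hess n (sq_coords (\<phi> v)) j c d * jac_inv n (sq_coords (\<phi> v)) d s)) (at (v s))"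
proof (cases "j < 2")
  case True
  then show ?thesis by (simp add: jac_def hess_def)
next
  case False
  let ?x = "sq_coords (\<phi> v)"
  have "((\<lambda>t. esym ({1..n} - {c}) (Suc (j - 2)) (\<lambda>b. sq_coords (\<phi> (v(s := t))) b)) has_field_derivative
      (\<Sum>d\<in>{1..n} - {c}. jac_inv n ?x d s * esym ({1..n} - {c} - {d}) (j - 2) (\<lambda>b. sq_coords (\<phi> (v(s := v s))) b)))
      (at (v s))"
    by (rule has_field_derivative_esym) (use has_field_derivative_chart_sq_coords[OF v s] in auto)
  moreover have "(\<Sum>d\<in>{1..n}. hess n ?x j c d * jac_inv n ?x d s)
      = (\<Sum>d\<in>{1..n} - {c}. jac_inv n ?x d s * esym ({1..n} - {c} - {d}) (j - 2) ?x)"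
    using c False sum.remove[of "{1..n}" c "\<lambda>d. hess n ?x j c d * jac_inv n ?x d s"]
    by (simp add: hess_def mult.commute)
  moreover have "j - 1 = Suc (j - 2)" using False by simp
  ultimately show ?thesis by (simp add: jac_def)
qed

lemma chart_jac_inv_differentiable:
  assumes v: "v \<in> V" and s: "s \<in> {1..n}" and a: "a \<in> {1..n}"
  shows "\<exists>D. ((\<lambda>t. jac_inv n (sq_coords (\<phi> (v(s := t)))) a l) has_field_derivative D) (at (v s))"
proof -
  let ?X = "\<lambda>t. sq_coords (\<phi> (v(s := t)))"
  let ?x = "sq_coords (\<phi> v)"
  have X: "((\<lambda>t. ?X t b) has_field_derivative jac_inv n ?x b s) (at (v s))" if "b \<in> {1..n}" for b
    using has_field_derivative_chart_sq_coords[OF v s that] .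
  have nonzero: "(\<Prod>b\<in>{1..n} - {a}. ?X (v s) a - ?X (v s) b) \<noteq> 0"
    using chart_sq_coords_distinct[OF v a] by auto
  have deriv_den: "((\<lambda>t. \<Prod>b\<in>{1..n} - {a}. ?X t a - ?X t b) has_field_derivative
      (\<Sum>b\<in>{1..n} - {a}. (jac_inv n ?x a s - jac_inv n ?x b s) * (\<Prod>c\<in>{1..n} - {a} - {b}. ?X (v s) a - ?X (v s) c)))
      (at (v s))"
    by (rule has_field_derivative_prod, rule DERIV_diff) (use X a in auto)
  have "\<exists>D. ((\<lambda>t. (-1)^(l + 1) * ?X t a ^ (n - l) / (\<Prod>b\<in>{1..n} - {a}. ?X t a - ?X t b))
      has_field_derivative D) (at (v s))"
    using DERIV_divide[OF DERIV_cmult[OF DERIV_power[OF X[OF a]]] deriv_den nonzero] by blast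
  then show ?thesis
    unfolding jac_inv_def .
qed

lemma has_field_derivative_chart_jac_inv:
  assumes v: "v \<in> V" and s: "s \<in> {1..n}" and a: "a \<in> {1..n}" and l: "l \<in> {1..n}"
  shows "((\<lambda>t. jac_inv n (sq_coords (\<phi> (v(s := t)))) a l) has_field_derivative
           jac_inv_deriv n (sq_coords (\<phi> v)) a s l) (at (v s))"
proof -
  let ?X = "\<lambda>t. sq_coords (\<phi> (v(s := t)))"
  let ?x = "sq_coords (\<phi> v)"
  have "\<forall>c\<in>{1..n}. \<exists>D. ((\<lambda>t. jac_inv n (?X t) c l) has_field_derivative D) (at (v s))"
    using chart_jac_inv_differentiable[OF v s] by blast
  from bchoice[OF this] obtain Md
    where Md: "\<forall>c\<in>{1..n}. ((\<lambda>t. jac_inv n (?X t) c l) has_field_derivative Md c) (at (v s))"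
    by blast
  have solution: "(\<Sum>c\<in>{1..n}. jac n ?x j c * Md c)
      = - (\<Sum>c\<in>{1..n}. \<Sum>d\<in>{1..n}. hess n ?x j c d * jac_inv n ?x d s * jac_inv n ?x c l)"
    if j: "j \<in> {1..n}" for j
  proof -
    have "((\<lambda>t. \<Sum>c\<in>{1..n}. jac n (?X t) j c * jac_inv n (?X t) c l) has_field_derivative
        (\<Sum>c\<in>{1..n}. (\<Sum>d\<in>{1..n}. hess n ?x j c d * jac_inv n ?x d s) * jac_inv n (?X (v s)) c l
          + Md c * jac n (?X (v s)) j c)) (at (v s))"
      by (rule DERIV_sum, rule DERIV_mult) (use has_field_derivative_chart_jac[OF v s] Md in auto)
    then have deriv_sum: "((\<lambda>t. \<Sum>c\<in>{1..n}. jac n (?X t) j c * jac_inv n (?X t) c l) has_field_derivative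
        (\<Sum>c\<in>{1..n}. (\<Sum>d\<in>{1..n}. hess n ?x j c d * jac_inv n ?x d s) * jac_inv n ?x c l
          + Md c * jac n ?x j c)) (at (v s))"
      by simp
    have "\<forall>\<^sub>F t in nhds (v s). (\<Sum>c\<in>{1..n}. jac n (?X t) j c * jac_inv n (?X t) c l) = of_bool (j = l)"
      using eventually_chart_line[OF v s] by eventually_elim (rule jac_jac_inv[OF _ j l])
    then have "((\<lambda>t. \<Sum>c\<in>{1..n}. jac n (?X t) j c * jac_inv n (?X t) c l) has_field_derivative 0) (at (v s))"
      by (subst DERIV_cong_ev[OF refl _ refl]) auto
    then have "(\<Sum>c\<in>{1..n}. (\<Sum>d\<in>{1..n}. hess n ?x j c d * jac_inv n ?x d s) * jac_inv n ?x c l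
        + Md c * jac n ?x j c) = 0"
      by (rule DERIV_unique[OF deriv_sum])
    then show ?thesis
      by (simp add: sum.distrib sum_distrib_left sum_distrib_right eq_neg_iff_add_eq_0 add.commute mult_ac)
  qed
  have "(\<Sum>j\<in>{1..n}. jac_inv n ?x a j * jac n ?x j c) = of_bool (a = c)" if "c \<in> {1..n}" for c
    using jac_inv_jac chart_sq_coords_distinct[OF v] a that by blast
  then have "Md a = (\<Sum>j\<in>{1..n}. jac_inv n ?x a j *
      - (\<Sum>c\<in>{1..n}. \<Sum>d\<in>{1..n}. hess n ?x j c d * jac_inv n ?x d s * jac_inv n ?x c l))"
    using solution by (rule solve_by_left_inverse[OF finite_atLeastAtMost a])
  moreover have "((\<lambda>t. jac_inv n (?X t) a l) has_field_derivative Md a) (at (v s))"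
    using Md a by blast
  ultimately show ?thesis
    by (simp add: jac_inv_deriv_def sum_negf)
qed

lemma pd_gu_low:
  assumes v: "v \<in> V" and "l \<in> {1..n}" "k \<in> {1..n}" and s: "s \<in> {1..n}"
  shows "pd (\<lambda>w. gu_low n \<phi> w l k) v s = (\<Sum>a\<in>{1..n}. \<Sum>b\<in>{1..n}. metric_sq n a b *
           (jac_inv_deriv n (sq_coords (\<phi> v)) a s l * jac_inv n (sq_coords (\<phi> v)) b k
            + jac_inv n (sq_coords (\<phi> v)) a l * jac_inv_deriv n (sq_coords (\<phi> v)) b s k))"
proof -
  let ?X = "\<lambda>t. sq_coords (\<phi> (v(s := t)))"
  let ?x = "sq_coords (\<phi> v)"
  have "((\<lambda>t. \<Sum>a\<in>{1..n}. \<Sum>b\<in>{1..n}. metric_sq n a b * jac_inv n (?X t) a l * jac_inv n (?X t) b k)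
      has_field_derivative (\<Sum>a\<in>{1..n}. \<Sum>b\<in>{1..n}. metric_sq n a b *
        (jac_inv_deriv n ?x a s l * jac_inv n ?x b k + jac_inv n ?x a l * jac_inv_deriv n ?x b s k))) (at (v s))"
    using assms
    by (auto intro!: derivative_eq_intros has_field_derivative_chart_jac_inv sum.cong simp: algebra_simps)
  moreover have "\<forall>\<^sub>F t in nhds (v s). gu_low n \<phi> (v(s := t)) l k
      = (\<Sum>a\<in>{1..n}. \<Sum>b\<in>{1..n}. metric_sq n a b * jac_inv n (?X t) a l * jac_inv n (?X t) b k)"
    using eventually_chart_line[OF v s] by eventually_elim (rule gu_low_chart[OF _ assms(2,3)])
  ultimately show ?thesis
    unfolding pd_def by (intro DERIV_imp_deriv) (subst DERIV_cong_ev[OF refl _ refl])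
qed

lemma contra_eq_mixed:
  assumes n: "2 \<le> n" and v: "v \<in> V" and i: "i \<in> {1..n}" and j: "j \<in> {1..n}" and k: "k \<in> {1..n}"
  shows "contra n \<phi> v i j k = (\<Sum>c\<in>{1..n}.
           (\<Sum>a\<in>{1..n}. \<Sum>b\<in>{1..n}. cometric_sq a b * jac n (sq_coords (\<phi> v)) i a * hess n (sq_coords (\<phi> v)) j c b)
           * jac_inv n (sq_coords (\<phi> v)) c k)"
proof -
  let ?S = "{1..n}"
  let ?x = "sq_coords (\<phi> v)"
  define gup where "gup j l = (\<Sum>c\<in>?S. \<Sum>d\<in>?S. cometric_sq c d * jac n ?x j c * jac n ?x l d)" for j l
  define dg where "dg l k s = (\<Sum>a\<in>?S. \<Sum>b\<in>?S. metric_sq n a b *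
      (jac_inv_deriv n ?x a s l * jac_inv n ?x b k + jac_inv n ?x a l * jac_inv_deriv n ?x b s k))" for l k s
  have gcou: "gcou n (\<phi> v) j' l = gup j' l" if "j' \<in> ?S" "l \<in> ?S" for j' l
    unfolding gup_def using gcou_eq_jac[OF chart_nonzero[OF v] that] .
  have pd_gu: "pd (\<lambda>w. gu_low n \<phi> w l k') v s = dg l k' s" if "l \<in> ?S" "k' \<in> ?S" "s \<in> ?S" for l k' s
    unfolding dg_def using pd_gu_low[OF v that] .
  have "contra n \<phi> v i j k = - (\<Sum>s\<in>?S. gup i s * (1/2 * (\<Sum>l\<in>?S. gup j l * (dg l k s + dg l s k - dg s k l))))"
    unfolding contra_def christ_def
  proof (intro arg_cong[where f = uminus] sum.cong refl arg_cong2[where f = times] arg_cong[where f = "\<lambda>z. 1/2 * z"])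
    fix s l assume "s \<in> ?S" "l \<in> ?S"
    then show "gcou n (\<phi> v) i s = gup i s" "gcou n (\<phi> v) j l = gup j l"
      "pd (\<lambda>w. gu_low n \<phi> w l k) v s + pd (\<lambda>w. gu_low n \<phi> w l s) v k - pd (\<lambda>w. gu_low n \<phi> w s k) v l
       = dg l k s + dg l s k - dg s k l"
      using i j k by (simp_all add: gcou pd_gu)
  qed
  also have "\<dots> = (\<Sum>c\<in>?S. (\<Sum>a\<in>?S. \<Sum>b\<in>?S. cometric_sq a b * jac n ?x i a * hess n ?x j c b) * jac_inv n ?x c k)"
  proof (rule contravariant_christoffel_of_flat_coords[where G = "metric_sq n" and N = "jac_inv_deriv n ?x",
        OF finite_atLeastAtMost j])
    show "(\<Sum>l\<in>?S. jac_inv n ?x a l * jac n ?x l d) = of_bool (a = d)" if "a \<in> ?S" "d \<in> ?S" for a d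
      using jac_inv_jac chart_sq_coords_distinct[OF v] that by blast
    show "(\<Sum>c\<in>?S. jac n ?x j c * jac_inv n ?x c i) = of_bool (j = i)" if "j \<in> ?S" "i \<in> ?S" for j i
      using jac_jac_inv[OF v that] .
    show "(\<Sum>d\<in>?S. metric_sq n d b * cometric_sq c d) = of_bool (c = b)" if "c \<in> ?S" "b \<in> ?S" for c b
      using metric_sq_cometric_sq_inverse[OF n that] .
    show "metric_sq n a b = metric_sq n b a" for a b
      by (simp add: metric_sq_def)
  qed (simp_all only: hess_sym jac_inv_deriv_def gup_def dg_def)
  finally show ?thesis .
qed

lemma contract_esym_span_jac_inv:
  assumes v: "v \<in> V" and k: "k \<in> {1..n}"
    and F: "\<forall>x. \<forall>c\<in>{1..n}. F x c = (\<Sum>r<n. \<Sum>m\<le>n. a r m * esym {1..n} m x * esym ({1..n} - {c}) r x)"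
  shows "(\<Sum>c\<in>{1..n}. F (sq_coords (\<phi> v)) c * jac_inv n (sq_coords (\<phi> v)) c k)
       = a (k - 1) 0 + (\<Sum>m = 1..n. a (k - 1) m * v m)"
proof -
  let ?x = "sq_coords (\<phi> v)"
  let ?E = "\<lambda>r. \<Sum>m\<le>n. a r m * esym {1..n} m ?x"
  have "(\<Sum>c\<in>{1..n}. F ?x c * jac_inv n ?x c k) = (\<Sum>c\<in>{1..n}. \<Sum>r<n. ?E r * (jac n ?x (Suc r) c * jac_inv n ?x c k))"
    using F by (simp add: jac_def sum_distrib_left sum_distrib_right mult_ac)
  also have "\<dots> = (\<Sum>r<n. ?E r * (\<Sum>c\<in>{1..n}. jac n ?x (Suc r) c * jac_inv n ?x c k))"
    by (subst sum.swap) (simp add: sum_distrib_left)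
  also have "\<dots> = (\<Sum>r<n. ?E r * of_bool (Suc r = k))"
    using jac_jac_inv[OF v _ k] by (intro sum.cong refl) auto
  also have "\<dots> = ?E (k - 1)"
  proof -
    have "{..<n} \<inter> {r. Suc r = k} = {k - 1}" using k by auto
    then show ?thesis by simp
  qed
  also have "\<dots> = a (k - 1) 0 + (\<Sum>m = 1..n. a (k - 1) m * v m)"
    using chart_esym[OF v] by (simp add: atMost_atLeast0 sum.atLeast_Suc_atMost)
  finally show ?thesis .
qed

end

lemma contra_affine:
  assumes "2 \<le> n" "i \<in> {1..n}" "j \<in> {1..n}" "k \<in> {1..n}"
  shows "\<exists>b. \<forall>V \<phi>. generic_chart n V \<phi> \<longrightarrow> (\<forall>v\<in>V. contra n \<phi> v i j k = b 0 + (\<Sum>m = 1..n. b m * v m))"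
proof -
  obtain a where a: "\<forall>x :: nat \<Rightarrow> complex. \<forall>c\<in>{1..n}.
      (\<Sum>a\<in>{1..n}. \<Sum>b\<in>{1..n}. cometric_sq a b * jac n x i a * hess n x j c b)
      = (\<Sum>r<n. \<Sum>m\<le>n. a r m * esym {1..n} m x * esym ({1..n} - {c}) r x)"
    using esym_span_mixed unfolding esym_span_def by blast
  show ?thesis
  proof (intro exI allI impI ballI)
    fix V \<phi> v assume "generic_chart n V \<phi>" "v \<in> V"
    then show "contra n \<phi> v i j k = a (k - 1) 0 + (\<Sum>m = 1..n. a (k - 1) m * v m)"
      using contra_eq_mixed[OF _ assms(1) _ assms(2-4)] contract_esym_span_jac_inv[OF _ _ assms(4) a] by simp
  qed
qed

lemma affine_eq_monomial_sum:
  fixes b :: "nat \<Rightarrow> 'a::comm_ring_1"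
  shows "\<exists>A c. finite A \<and> (\<forall>\<alpha>\<in>A. (\<forall>m. m \<notin> {1..n} \<longrightarrow> \<alpha> m = 0) \<and> (\<forall>m. \<alpha> m \<le> 1)) \<and>
           (\<forall>v. b 0 + (\<Sum>m = 1..n. b m * v m) = (\<Sum>\<alpha>\<in>A. c \<alpha> * (\<Prod>q = 1..n. v q ^ \<alpha> q)))"
proof -
  \<comment> \<open>expo m is the exponent vector of the monomial v m, and expo 0 that of 1\<close>
  define expo :: "nat \<Rightarrow> nat \<Rightarrow> nat" where "expo m q = (if q = m \<and> q \<noteq> 0 then 1 else 0)" for m q
  have inj: "inj_on expo {0..n}"
  proof (rule inj_onI)
    fix m m' assume eq: "expo m = expo m'"
    show "m = m'"
    proof (rule ccontr)
      assume "m \<noteq> m'"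
      then have "expo m m \<noteq> expo m' m \<or> expo m m' \<noteq> expo m' m'"
        unfolding expo_def by auto
      with eq show False by simp
    qed
  qed
  have monomial: "(\<Prod>q = 1..n. v q ^ expo m q) = (if m = 0 then 1 else v m)" if "m \<le> n" for v :: "nat \<Rightarrow> 'a" and m
  proof -
    have "(\<Prod>q = 1..n. v q ^ expo m q) = (\<Prod>q = 1..n. if q = m then v q else 1)"
      by (rule prod.cong) (auto simp: expo_def)
    then show ?thesis using that by simp
  qed
  define c where "c = b \<circ> the_inv_into {0..n} expo"
  have expansion: "b 0 + (\<Sum>m = 1..n. b m * v m) = (\<Sum>\<alpha>\<in>expo ` {0..n}. c \<alpha> * (\<Prod>q = 1..n. v q ^ \<alpha> q))"
    for v :: "nat \<Rightarrow> 'a"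
  proof -
    have "(\<Sum>\<alpha>\<in>expo ` {0..n}. c \<alpha> * (\<Prod>q = 1..n. v q ^ \<alpha> q)) = (\<Sum>m = 0..n. b m * (\<Prod>q = 1..n. v q ^ expo m q))"
      using inj by (simp add: sum.reindex c_def the_inv_into_f_f)
    also have "\<dots> = (\<Sum>m = 0..n. b m * (if m = 0 then 1 else v m))"
      by (rule sum.cong[OF refl], subst monomial) auto
    also have "\<dots> = b 0 + (\<Sum>m = 1..n. b m * v m)"
      by (simp add: sum.atLeast_Suc_atMost)
    finally show ?thesis by (rule sym)
  qed
  have "\<forall>\<alpha>\<in>expo ` {0..n}. (\<forall>m. m \<notin> {1..n} \<longrightarrow> \<alpha> m = 0) \<and> (\<forall>m. \<alpha> m \<le> 1)"
    unfolding expo_def by auto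
  with expansion show ?thesis
    by (intro exI[of _ "expo ` {0..n}"] exI[of _ c]) simp
qed

lemma contra_polynomial:
  assumes "2 \<le> n" "i \<in> {1..n}" "j \<in> {1..n}" "k \<in> {1..n}"
  shows "\<exists>A c. finite A \<and> (\<forall>\<alpha>\<in>A. (\<forall>m. m \<notin> {1..n} \<longrightarrow> \<alpha> m = 0) \<and> (\<forall>m. \<alpha> m \<le> 1)) \<and>
           (\<forall>V \<phi>. generic_chart n V \<phi> \<longrightarrow>
              (\<forall>v\<in>V. contra n \<phi> v i j k = (\<Sum>\<alpha>\<in>A. c \<alpha> * (\<Prod>m = 1..n. v m ^ \<alpha> m))))"
proof -
  obtain b where b: "\<forall>V \<phi>. generic_chart n V \<phi> \<longrightarrow>
      (\<forall>v\<in>V. contra n \<phi> v i j k = b 0 + (\<Sum>m = 1..n. b m * v m))"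
    using contra_affine[OF assms] by blast
  obtain A c where A: "finite A" "\<forall>\<alpha>\<in>A. (\<forall>m. m \<notin> {1..n} \<longrightarrow> \<alpha> m = 0) \<and> (\<forall>m. \<alpha> m \<le> 1)"
    and expansion: "\<And>v. b 0 + (\<Sum>m = 1..n. b m * v m) = (\<Sum>\<alpha>\<in>A. c \<alpha> * (\<Prod>m = 1..n. v m ^ \<alpha> m))"
    using affine_eq_monomial_sum[where b = b and n = n] by blast
  have "\<forall>V \<phi>. generic_chart n V \<phi> \<longrightarrow>
      (\<forall>v\<in>V. contra n \<phi> v i j k = (\<Sum>\<alpha>\<in>A. c \<alpha> * (\<Prod>m = 1..n. v m ^ \<alpha> m)))"
    using b by (simp only: expansion)
  with A show ?thesis by blast
qed

theorem mainTheorem9: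
  fixes n :: nat
  assumes "n \<ge> 2"
  shows "\<forall>i\<in>{1..n}. \<forall>j\<in>{1..n}. \<forall>k\<in>{1..n}.
           \<exists>(A :: (nat \<Rightarrow> nat) set) (c :: (nat \<Rightarrow> nat) \<Rightarrow> complex).
             finite A \<and>
             (\<forall>\<alpha>\<in>A. (\<forall>m. m \<notin> {1..n} \<longrightarrow> \<alpha> m = 0) \<and> \<alpha> (n - 1) \<le> 1) \<and>
             (\<forall>V \<phi>. generic_chart n V \<phi> \<longrightarrow>
                (\<forall>v\<in>V. contra n \<phi> v i j k = (\<Sum>\<alpha>\<in>A. c \<alpha> * (\<Prod>m=1..n. v m ^ \<alpha> m))))"
proof (intro ballI)
  fix i j k assume "i \<in> {1..n}" "j \<in> {1..n}" "k \<in> {1..n}"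
  from contra_polynomial[OF assms this] obtain A c
    where "finite A" "\<forall>\<alpha>\<in>A. (\<forall>m. m \<notin> {1..n} \<longrightarrow> \<alpha> m = 0) \<and> (\<forall>m. \<alpha> m \<le> 1)"
      "\<forall>V \<phi>. generic_chart n V \<phi> \<longrightarrow> (\<forall>v\<in>V. contra n \<phi> v i j k = (\<Sum>\<alpha>\<in>A. c \<alpha> * (\<Prod>m = 1..n. v m ^ \<alpha> m)))"
    by blast
  then show "\<exists>(A :: (nat \<Rightarrow> nat) set) (c :: (nat \<Rightarrow> nat) \<Rightarrow> complex). finite A \<and>
      (\<forall>\<alpha>\<in>A. (\<forall>m. m \<notin> {1..n} \<longrightarrow> \<alpha> m = 0) \<and> \<alpha> (n - 1) \<le> 1) \<and>
      (\<forall>V \<phi>. generic_chart n V \<phi> \<longrightarrow> (\<forall>v\<in>V. contra n \<phi> v i j k = (\<Sum>\<alpha>\<in>A. c \<alpha> * (\<Prod>m = 1..n. v m ^ \<alpha> m))))"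
    by (intro exI[of _ A] exI[of _ c]) auto
qed

end
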